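(* Let $k\ge1$, let $M=\Gamma(\mathbb Z\,\overrightarrow{\times}\,G,(k,0))$ with $G$ a Dedekind $\sigma$-complete $\ell$-group, and let $F:\mathbb R^2\to M$ be a two-dimensional spectral resolution. Then every non-empty $T_i$, $i\in\{1,\ldots,k\}$, has at most $k$ characteristic points, and $F$ has at most $k^2$ characteristic points.
   Context: $\mathbb Z\,\overrightarrow{\times}\,G$ is $\mathbb Z\times G$ with lexicographic order; $\Gamma(K,v)=([0,v];\oplus,',0,v)$ with $a\oplus b=(a+b)\wedge v$. A two-dimensional spectral resolution is $F:\mathbb R^2\to M$ such that: (i) $F$ is monotone; (ii) $\bigvee_{(s,t)}F(s,t)=1$; (iii) $F(s,t)=\bigvee_{(s',t')\ll(s,t)}F(s',t')$; (iv) $\bigwedge_sF(s,t)=0=\bigwedge_tF(s,t)$; (v) $0\le F(b_1,b_2)-F(a_1,b_2)-F(b_1,a_2)+F(a_1,a_2)\le1$ for $a_1\le b_1$, $a_2\le b_2$ (in the group). $M_j=\{(j,g)\in M\}$, $T_j=\{(s,t)\colon F(s,t)\in M_j\}$. For $i\ge1$ and $(s,t)\in T_i$, $\pi_i(s,t)=(\inf\{r\colon(r,t)\in T_i\},\inf\{r\colon(s,r)\in T_i\})$; characteristic points of $T_i$ are the $\pi_i(s,t)$, $(s,t)\in T_i$; characteristic points of $F$ are those of the $T_i$, $i\ge1$. *)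

theory Defs
  imports Main "HOL-Library.Lattice_Algebras" "HOL-Library.Product_Plus" "HOL-Library.Countable_Set"
begin

(* Lexicographic order on Z x G  (the group Z lex-times G; group operations are componentwise,
   provided by HOL-Library.Product_Plus) *)
definition lex_le :: "int \<times> 'g::order \<Rightarrow> int \<times> 'g \<Rightarrow> bool" where
  "lex_le x y \<longleftrightarrow> fst x < fst y \<or> (fst x = fst y \<and> snd x \<le> snd y)"

definition gamma_lex :: "nat \<Rightarrow> (int \<times> 'g::{order,zero}) set" where
  "gamma_lex k = {x. lex_le (0, 0) x \<and> lex_le x (int k, 0)}"

definition is_sup_in :: "(int \<times> 'g::order) set \<Rightarrow> (int \<times> 'g) set \<Rightarrow> int \<times> 'g \<Rightarrow> bool" where
  "is_sup_in A S x \<longleftrightarrow> x \<in> A \<and> (\<forall>y\<in>S. lex_le y x) \<and>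
     (\<forall>z\<in>A. (\<forall>y\<in>S. lex_le y z) \<longrightarrow> lex_le x z)"

definition is_inf_in :: "(int \<times> 'g::order) set \<Rightarrow> (int \<times> 'g) set \<Rightarrow> int \<times> 'g \<Rightarrow> bool" where
  "is_inf_in A S x \<longleftrightarrow> x \<in> A \<and> (\<forall>y\<in>S. lex_le x y) \<and>
     (\<forall>z\<in>A. (\<forall>y\<in>S. lex_le z y) \<longrightarrow> lex_le z x)"

definition dedekind_sigma_complete :: "'g::order itself \<Rightarrow> bool" where
  "dedekind_sigma_complete _ \<longleftrightarrow>
     (\<forall>S::'g set. countable S \<and> S \<noteq> {} \<and> bdd_above S \<longrightarrow>
        (\<exists>x. (\<forall>y\<in>S. y \<le> x) \<and> (\<forall>z. (\<forall>y\<in>S. y \<le> z) \<longrightarrow> x \<le> z)))"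

definition spectral_resolution2 ::
  "nat \<Rightarrow> (real \<times> real \<Rightarrow> int \<times> 'g::lattice_ab_group_add) \<Rightarrow> bool" where
  "spectral_resolution2 k F \<longleftrightarrow>
     (\<forall>p. F p \<in> gamma_lex k) \<and>
     (\<forall>s t s' t'. s \<le> s' \<and> t \<le> t' \<longrightarrow> lex_le (F (s, t)) (F (s', t'))) \<and>
     is_sup_in (gamma_lex k) (range F) (int k, 0) \<and>
     (\<forall>s t. is_sup_in (gamma_lex k) {F (s', t') | s' t'. s' < s \<and> t' < t} (F (s, t))) \<and>
     (\<forall>t. is_inf_in (gamma_lex k) {F (s, t) | s. True} (0, 0)) \<and>
     (\<forall>s. is_inf_in (gamma_lex k) {F (s, t) | t. True} (0, 0)) \<and>
     (\<forall>a1 b1 a2 b2. a1 \<le> b1 \<and> a2 \<le> b2 \<longrightarrow>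
        lex_le (0, 0) (F (b1, b2) - F (a1, b2) - F (b1, a2) + F (a1, a2)) \<and>
        lex_le (F (b1, b2) - F (a1, b2) - F (b1, a2) + F (a1, a2)) (int k, 0))"

definition level_set :: "(real \<times> real \<Rightarrow> int \<times> 'g) \<Rightarrow> int \<Rightarrow> (real \<times> real) set" where
  "level_set F j = {p. fst (F p) = j}"

definition char_proj :: "(real \<times> real \<Rightarrow> int \<times> 'g) \<Rightarrow> int \<Rightarrow> real \<times> real \<Rightarrow> real \<times> real" where
  "char_proj F i p = (Inf {r. (r, snd p) \<in> level_set F i}, Inf {r. (fst p, r) \<in> level_set F i})"

definition char_points :: "(real \<times> real \<Rightarrow> int \<times> 'g) \<Rightarrow> int \<Rightarrow> (real \<times> real) set" where
  "char_points F i = char_proj F i ` level_set F i"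

definition all_char_points :: "(real \<times> real \<Rightarrow> int \<times> 'g) \<Rightarrow> (real \<times> real) set" where
  "all_char_points F = (\<Union>i\<in>{i. i \<ge> 1}. char_points F i)"

end

theory Submission imports Defs begin

(* Only the integer part h = fst o F of the resolution matters. In Z lex-times G the integer part of
   a supremum or infimum is attained inside the set, so h inherits from F monotonicity, the
   rectangle inequality, the values 0..k, zeros on every line and left continuity in the form
   h(s,t) = h(s',t') for some s' < s, t' < t. On the horizontal line at height t, h jumps at the
   left end of every non-empty level set; by the rectangle inequality a jump at height t persists
   at all greater heights, and h can jump at most k times, so all these left ends together form a
   set of at most k abscissae. The rectangle inequality also shows that the first coordinate of a
   characteristic point of T_i determines the second one, so each T_i has at most k characteristic
   points and F has at most k^2. *)

lemma lex_le_trans: "lex_le x y \<Longrightarrow> lex_le y z \<Longrightarrow> lex_le x z"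
  by (auto simp: lex_le_def)

lemma lex_le_uminus_iff:
  fixes x y :: "int \<times> 'g::ordered_ab_group_add"
  shows "lex_le (- x) (- y) \<longleftrightarrow> lex_le y x"
  by (auto simp: lex_le_def)

lemma trivial_or_exists_positive: "(\<forall>g::'g::lattice_ab_group_add. g = 0) \<or> (\<exists>p::'g. 0 < p)"
proof (rule disjCI)
  assume "\<nexists>p::'g. 0 < p"
  show "\<forall>g::'g. g = 0"
  proof
    fix e :: 'g
    have "0 \<le> sup e (- e) + sup e (- e)"
      by (metis add_mono sup_ge1 sup_ge2 right_minus)
    then show "e = 0"
      using \<open>\<nexists>p. 0 < p\<close> by (metis order_less_le zero_le_double_add_iff_zero_le_single_add sup_0_eq_0)
  qed
qed

lemma lex_gap_below:
  fixes w x :: "int \<times> 'g::lattice_ab_group_add"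
  assumes "lex_le w x" and "fst w < fst x"
  obtains z where "lex_le w z" and "lex_le z x" and "\<not> lex_le x z"
    and "\<And>y. fst y < fst x \<Longrightarrow> lex_le y z"
  using trivial_or_exists_positive[where 'g='g]
proof
  assume "\<forall>g::'g. g = 0"
  then have "g \<le> 0" for g :: 'g by (metis order_refl)
  then show thesis
    using assms by (intro that[of "(fst x - 1, 0)"]) (auto simp: lex_le_def)
next
  assume "\<exists>p::'g. 0 < p"
  then obtain p :: 'g where "0 < p" by blast
  then show thesis
    using assms by (intro that[of "(fst x, snd x - p)"]) (auto simp: lex_le_def)
qed

lemma lex_gap_above:
  fixes w x :: "int \<times> 'g::lattice_ab_group_add"
  assumes "lex_le x w" and "fst x < fst w"
  obtains z where "lex_le z w" and "lex_le x z" and "\<not> lex_le z x"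
    and "\<And>y. fst x < fst y \<Longrightarrow> lex_le z y"
proof -
  have neg: "lex_le (- w) (- x)" "fst (- w) < fst (- x)"
    using assms by (simp_all add: lex_le_uminus_iff)
  obtain z where z: "lex_le (- w) z" "lex_le z (- x)" "\<not> lex_le (- x) z"
    and below: "\<And>y. fst y < fst (- x) \<Longrightarrow> lex_le y z"
    using lex_gap_below[OF neg] by blast
  show thesis
  proof (rule that[of "- z"])
    show "lex_le (- z) w" using z(1) lex_le_uminus_iff[of w "- z"] by simp
    show "lex_le x (- z)" using z(2) lex_le_uminus_iff[of "- z" x] by simp
    show "\<not> lex_le (- z) x" using z(3) lex_le_uminus_iff[of x "- z"] by simp
    show "lex_le (- z) y" if "fst x < fst y" for y
      using below[of "- y"] that lex_le_uminus_iff[of y "- z"] by simp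
  qed
qed

lemma is_sup_in_gamma_lex_fst_attained:
  fixes Y :: "(int \<times> 'g::lattice_ab_group_add) set"
  assumes "Y \<subseteq> gamma_lex k" and "Y \<noteq> {}" and sup: "is_sup_in (gamma_lex k) Y x"
  shows "\<exists>y\<in>Y. fst y = fst x"
proof (rule ccontr)
  assume "\<not> ?thesis"
  then have less: "fst y < fst x" if "y \<in> Y" for y
    using sup that by (force simp: is_sup_in_def lex_le_def)
  obtain y0 where "y0 \<in> Y" using assms(2) by blast
  have x: "lex_le (0, 0) x" "lex_le x (int k, 0)"
    using sup by (auto simp: is_sup_in_def gamma_lex_def)
  have "fst (0::int, 0::'g) < fst x"
    using less[OF \<open>y0 \<in> Y\<close>] \<open>y0 \<in> Y\<close> assms(1) by (force simp: gamma_lex_def lex_le_def)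
  then obtain z where "lex_le (0, 0) z" "lex_le z x" "\<not> lex_le x z"
    and "\<And>y. fst y < fst x \<Longrightarrow> lex_le y z"
    using lex_gap_below[OF x(1)] by blast
  moreover from this have "z \<in> gamma_lex k"
    using x lex_le_trans unfolding gamma_lex_def by blast
  ultimately show False
    using sup less by (auto simp: is_sup_in_def)
qed

lemma is_inf_in_gamma_lex_fst_attained:
  fixes Y :: "(int \<times> 'g::lattice_ab_group_add) set"
  assumes "Y \<subseteq> gamma_lex k" and "Y \<noteq> {}" and inf: "is_inf_in (gamma_lex k) Y x"
  shows "\<exists>y\<in>Y. fst y = fst x"
proof (rule ccontr)
  assume "\<not> ?thesis"
  then have greater: "fst x < fst y" if "y \<in> Y" for y
    using inf that by (force simp: is_inf_in_def lex_le_def)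
  obtain y0 where "y0 \<in> Y" using assms(2) by blast
  have x: "lex_le (0, 0) x" "lex_le x (int k, 0)"
    using inf by (auto simp: is_inf_in_def gamma_lex_def)
  have "fst x < fst (int k, 0::'g)"
    using greater[OF \<open>y0 \<in> Y\<close>] \<open>y0 \<in> Y\<close> assms(1) by (force simp: gamma_lex_def lex_le_def)
  then obtain z where "lex_le z (int k, 0)" "lex_le x z" "\<not> lex_le z x"
    and "\<And>y. fst x < fst y \<Longrightarrow> lex_le z y"
    using lex_gap_above[OF x(2)] by blast
  moreover from this have "z \<in> gamma_lex k"
    using x lex_le_trans unfolding gamma_lex_def by blast
  ultimately show False
    using inf greater by (auto simp: is_inf_in_def)
qed

locale int_resolution =
  fixes h :: "real \<Rightarrow> real \<Rightarrow> int" and k :: nat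
  assumes mono: "s \<le> s' \<Longrightarrow> t \<le> t' \<Longrightarrow> h s t \<le> h s' t'"
    and nonneg: "0 \<le> h s t"
    and bounded: "h s t \<le> int k"
    and rectangle: "a1 \<le> b1 \<Longrightarrow> a2 \<le> b2 \<Longrightarrow> h a1 b2 + h b1 a2 \<le> h b1 b2 + h a1 a2"
    and zero_on_row: "\<exists>s. h s t = 0"
    and zero_on_column: "\<exists>t. h s t = 0"
    and left_continuous: "\<exists>s'<s. \<exists>t'<t. h s' t' = h s t"
begin

lemma transpose: "int_resolution (\<lambda>s t. h t s) k"
proof
  fix a1 b1 a2 b2 :: real
  assume "a1 \<le> b1" "a2 \<le> b2"
  then show "h b2 a1 + h a2 b1 \<le> h b2 b1 + h a2 a1"
    using rectangle[of a2 b2 a1 b1] by simp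
next
  fix s t
  show "\<exists>s'<s. \<exists>t'<t. h t' s' = h t s"
    using left_continuous[of t s] by blast
qed (simp_all add: mono nonneg bounded zero_on_row zero_on_column)

definition row_start :: "int \<Rightarrow> real \<Rightarrow> real" where
  "row_start i t = Inf {s. h s t = i}"

lemma bdd_below_row_level:
  assumes "1 \<le> i"
  shows "bdd_below {s. h s t = i}"
proof -
  obtain s0 where "h s0 t = 0" using zero_on_row by blast
  then have "s0 \<le> s" if "h s t = i" for s
    using mono[of s s0 t t] that assms by force
  then show ?thesis unfolding bdd_below_def by blast
qed

lemma row_start_le:
  assumes "1 \<le> i" and "h s t = i"
  shows "row_start i t \<le> s"
  unfolding row_start_def using assms by (intro cInf_lower bdd_below_row_level) auto

lemma row_start_less:
  assumes "1 \<le> i" and "h s t = i"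
  shows "row_start i t < s"
proof -
  obtain s' t' where "s' < s" "t' < t" "h s' t' = i"
    using left_continuous assms(2) by blast
  then have "h s' t = i"
    using mono[of s' s' t' t] mono[of s' s t t] assms(2) by fastforce
  then show ?thesis
    using row_start_le[OF assms(1)] \<open>s' < s\<close> by fastforce
qed

lemma level_ge_right_of_row_start:
  assumes "h s t = i" and "row_start i t < r"
  shows "i \<le> h r t"
proof -
  obtain l where "h l t = i" "l < r"
    using cInf_lessD[of "{s. h s t = i}"] assms unfolding row_start_def by blast
  then show ?thesis using mono[of l r t t] by simp
qed

lemma level_less_left_of_row_start:
  assumes "1 \<le> i" and "h s t = i" and "r < row_start i t"
  shows "h r t < i"
proof -
  have "h r t \<le> i"
    using row_start_le[OF assms(1,2)] assms(2,3) mono[of r s t t] by simp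
  moreover have "h r t \<noteq> i"
    using row_start_le[OF assms(1), of r t] assms(3) by auto
  ultimately show ?thesis by simp
qed

definition jumps_at :: "real \<Rightarrow> real \<Rightarrow> bool" where
  "jumps_at a t \<longleftrightarrow> (\<forall>r' r. r' < a \<longrightarrow> a < r \<longrightarrow> h r' t < h r t)"

lemma jumps_at_row_start:
  assumes "1 \<le> i" and "h s t = i"
  shows "jumps_at (row_start i t) t"
  unfolding jumps_at_def
  using level_ge_right_of_row_start[OF assms(2)] level_less_left_of_row_start[OF assms]
  by fastforce

lemma jumps_at_mono:
  assumes "jumps_at a t" and "t \<le> t'"
  shows "jumps_at a t'"
  unfolding jumps_at_def
proof (intro allI impI)
  fix r' r assume "r' < a" "a < r"
  then have "h r' t < h r t" using assms(1) unfolding jumps_at_def by blast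
  moreover have "h r' t' + h r t \<le> h r t' + h r' t"
    using rectangle[of r' r t t'] \<open>r' < a\<close> \<open>a < r\<close> assms(2) by simp
  ultimately show "h r' t' < h r t'" by simp
qed

lemma card_le_if_jumps_at:
  assumes "finite S" and "\<forall>a\<in>S. jumps_at a t" and "\<forall>a\<in>S. a < r"
  shows "int (card S) \<le> h r t"
  using assms
proof (induction S arbitrary: r rule: finite_linorder_max_induct)
  case empty
  then show ?case using nonneg by simp
next
  case (insert b A)
  \<comment> \<open>The extra element b - 1 only keeps the maximum defined when A is empty.\<close>
  obtain r' where "Max (insert (b - 1) A) < r'" "r' < b"
    using dense[of "Max (insert (b - 1) A)" b] insert.hyps by auto
  then have "\<forall>a\<in>A. a < r'" using insert.hyps(1) by auto
  then have "int (card A) \<le> h r' t" using insert.IH insert.prems by blast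
  moreover have "h r' t < h r t"
    using insert.prems \<open>r' < b\<close> unfolding jumps_at_def by blast
  moreover have "b \<notin> A" using insert.hyps(2) by blast
  ultimately show ?case
    using insert.hyps(1) by simp
qed

definition jump_points :: "real set" where
  "jump_points = {a. \<exists>t. jumps_at a t}"

lemma finite_jump_points: "finite jump_points" and card_jump_points_le: "card jump_points \<le> k"
proof -
  have "card S \<le> k" if "S \<subseteq> jump_points" "finite S" for S
  proof (cases "S = {}")
    case False
    obtain row where "\<forall>a\<in>S. jumps_at a (row a)"
      using \<open>S \<subseteq> jump_points\<close> bchoice[of S "\<lambda>a t. jumps_at a t"]
      unfolding jump_points_def by blast
    then have "\<forall>a\<in>S. jumps_at a (Max (row ` S))"
      using jumps_at_mono \<open>finite S\<close> by (meson Max_ge finite_imageI imageI)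
    moreover have "\<forall>a\<in>S. a < Max S + 1"
      using \<open>finite S\<close> by (meson Max_ge less_add_one order_le_less_trans)
    ultimately have "int (card S) \<le> h (Max S + 1) (Max (row ` S))"
      using card_le_if_jumps_at \<open>finite S\<close> by blast
    then show ?thesis using bounded by (meson of_nat_le_iff order_trans)
  qed simp
  then show "finite jump_points" "card jump_points \<le> k"
    using finite_if_finite_subsets_card_bdd by blast+
qed

sublocale transposed: int_resolution "\<lambda>s t. h t s" k
  by (rule transpose)

abbreviation column_start :: "int \<Rightarrow> real \<Rightarrow> real" where
  "column_start \<equiv> int_resolution.row_start (\<lambda>s t. h t s)"

definition char_corners :: "int \<Rightarrow> (real \<times> real) set" where
  "char_corners i = (\<lambda>(s, t). (row_start i t, column_start i s)) ` {(s, t). h s t = i}"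

lemma column_start_le_if_row_start_eq:
  assumes i: "1 \<le> i" and st: "h s t = i" and st': "h s' t' = i"
    and eq: "row_start i t = row_start i t'"
  shows "column_start i s' \<le> column_start i s"
proof (rule leI, rule notI)
  assume less: "column_start i s < column_start i s'"
  define r where "r = min s s'"
  have "row_start i t < r"
    using row_start_less[OF i st] row_start_less[OF i st'] eq unfolding r_def by simp
  then have "i \<le> h r t"
    using level_ge_right_of_row_start[OF st] by blast
  have "column_start i s < t"
    using transposed.row_start_less[OF i, of s t] st by simp
  then obtain r' where r': "column_start i s < r'" "r' < column_start i s'" "r' < t"
    using less dense[of "column_start i s" "min (column_start i s') t"] by auto
  have "i \<le> h s r'"
    using transposed.level_ge_right_of_row_start[of s t i r'] st r'(1) by simp
  moreover have "h r t + h s r' \<le> h s t + h r r'"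
    using rectangle[of r s r' t] r'(3) unfolding r_def by simp
  moreover have "h r r' \<le> h s' r'"
    using mono unfolding r_def by simp
  moreover have "h s' r' < i"
    using transposed.level_less_left_of_row_start[OF i, of s' t' r'] st' r'(2) by simp
  ultimately show False
    using \<open>i \<le> h r t\<close> st by simp
qed

lemma
  assumes "1 \<le> i"
  shows finite_char_corners: "finite (char_corners i)"
    and card_char_corners_le: "card (char_corners i) \<le> k"
proof -
  have inj: "inj_on fst (char_corners i)"
  proof (rule inj_onI)
    fix p q assume "p \<in> char_corners i" "q \<in> char_corners i" "fst p = fst q"
    then obtain s t s' t' where "h s t = i" "h s' t' = i"
      and "p = (row_start i t, column_start i s)" "q = (row_start i t', column_start i s')"
      and "row_start i t = row_start i t'"
      unfolding char_corners_def by auto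
    then show "p = q"
      using column_start_le_if_row_start_eq[OF assms] by (metis order_antisym)
  qed
  have jumps: "fst ` char_corners i \<subseteq> jump_points"
  proof
    fix a assume "a \<in> fst ` char_corners i"
    then obtain s t where "h s t = i" "a = row_start i t"
      unfolding char_corners_def by auto
    then show "a \<in> jump_points"
      using jumps_at_row_start[OF assms] unfolding jump_points_def by blast
  qed
  show "finite (char_corners i)"
    using finite_jump_points finite_imageD[OF finite_subset[OF jumps] inj] by blast
  have "card (char_corners i) = card (fst ` char_corners i)"
    using card_image[OF inj] by simp
  also have "\<dots> \<le> card jump_points"
    using card_mono[OF finite_jump_points jumps] .
  finally show "card (char_corners i) \<le> k"
    using card_jump_points_le by simp
qed

end

lemma spectral_resolution2_int_resolution:
  fixes F :: "real \<times> real \<Rightarrow> int \<times> 'g::lattice_ab_group_add"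
  assumes "spectral_resolution2 k F"
  shows "int_resolution (\<lambda>s t. fst (F (s, t))) k"
proof -
  have range: "\<And>s t. F (s, t) \<in> gamma_lex k"
    and mono: "\<And>s t s' t'. s \<le> s' \<Longrightarrow> t \<le> t' \<Longrightarrow> lex_le (F (s, t)) (F (s', t'))"
    and sup: "\<And>s t. is_sup_in (gamma_lex k) {F (s', t') | s' t'. s' < s \<and> t' < t} (F (s, t))"
    and inf_row: "\<And>t. is_inf_in (gamma_lex k) {F (s, t) | s. True} (0, 0)"
    and inf_column: "\<And>s. is_inf_in (gamma_lex k) {F (s, t) | t. True} (0, 0)"
    and rectangle: "\<And>a1 b1 a2 b2. a1 \<le> b1 \<Longrightarrow> a2 \<le> b2 \<Longrightarrow>
      lex_le (0, 0) (F (b1, b2) - F (a1, b2) - F (b1, a2) + F (a1, a2))"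
    using assms unfolding spectral_resolution2_def by simp_all
  show ?thesis
  proof
    fix s s' t t' :: real assume "s \<le> s'" "t \<le> t'"
    then show "fst (F (s, t)) \<le> fst (F (s', t'))"
      using mono unfolding lex_le_def by fastforce
  next
    fix s t
    show "0 \<le> fst (F (s, t))" "fst (F (s, t)) \<le> int k"
      using range[of s t] unfolding gamma_lex_def lex_le_def by auto
  next
    fix a1 b1 a2 b2 :: real assume "a1 \<le> b1" "a2 \<le> b2"
    then show "fst (F (a1, b2)) + fst (F (b1, a2)) \<le> fst (F (b1, b2)) + fst (F (a1, a2))"
      using rectangle unfolding lex_le_def by fastforce
  next
    fix t
    have "{F (s, t) | s. True} \<subseteq> gamma_lex k" "{F (s, t) | s. True} \<noteq> {}"
      using range by blast+
    then have "\<exists>y\<in>{F (s, t) | s. True}. fst y = 0"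
      using is_inf_in_gamma_lex_fst_attained[OF _ _ inf_row] by simp
    then show "\<exists>s. fst (F (s, t)) = 0" by blast
  next
    fix s
    have "{F (s, t) | t. True} \<subseteq> gamma_lex k" "{F (s, t) | t. True} \<noteq> {}"
      using range by blast+
    then have "\<exists>y\<in>{F (s, t) | t. True}. fst y = 0"
      using is_inf_in_gamma_lex_fst_attained[OF _ _ inf_column] by simp
    then show "\<exists>t. fst (F (s, t)) = 0" by blast
  next
    fix s t
    have "F (s - 1, t - 1) \<in> {F (s', t') | s' t'. s' < s \<and> t' < t}"
      by force
    then have "\<exists>y\<in>{F (s', t') | s' t'. s' < s \<and> t' < t}. fst y = fst (F (s, t))"
      using is_sup_in_gamma_lex_fst_attained[OF _ _ sup] range by blast
    then show "\<exists>s'<s. \<exists>t'<t. fst (F (s', t')) = fst (F (s, t))" by blast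
  qed
qed

lemma char_points_eq_char_corners:
  assumes "int_resolution (\<lambda>s t. fst (F (s, t))) k"
  shows "char_points F i = int_resolution.char_corners (\<lambda>s t. fst (F (s, t))) i"
proof -
  interpret int_resolution "\<lambda>s t. fst (F (s, t))" k by (fact assms)
  show ?thesis
    unfolding char_points_def char_proj_def level_set_def char_corners_def
      row_start_def transposed.row_start_def
    by (rule image_cong) auto
qed

lemma all_char_points_eq_UN:
  assumes "\<And>p. fst (F p) \<le> int k"
  shows "all_char_points F = (\<Union>i\<in>{1..int k}. char_points F i)"
  using assms by (fastforce simp: all_char_points_def char_points_def level_set_def)

theorem theorem4p4:
  fixes k :: nat and F :: "real \<times> real \<Rightarrow> int \<times> 'g::lattice_ab_group_add"
  assumes "k \<ge> 1"
    and "dedekind_sigma_complete TYPE('g)"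
    and "spectral_resolution2 k F"
  shows "(\<forall>i\<in>{1..int k}. level_set F i \<noteq> {} \<longrightarrow>
            finite (char_points F i) \<and> card (char_points F i) \<le> k) \<and>
         finite (all_char_points F) \<and> card (all_char_points F) \<le> k ^ 2"
proof -
  interpret int_resolution "\<lambda>s t. fst (F (s, t))" k
    using spectral_resolution2_int_resolution[OF assms(3)] .
  have level: "finite (char_points F i)" "card (char_points F i) \<le> k" if "1 \<le> i" for i
    using finite_char_corners[OF that] card_char_corners_le[OF that] int_resolution_axioms
    by (simp_all add: char_points_eq_char_corners)
  have UN: "all_char_points F = (\<Union>i\<in>{1..int k}. char_points F i)"
    using bounded by (intro all_char_points_eq_UN) (metis prod.collapse)
  have "card (all_char_points F) \<le> (\<Sum>i\<in>{1..int k}. card (char_points F i))"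
    unfolding UN by (rule card_UN_le) simp
  also have "\<dots> \<le> (\<Sum>i\<in>{1..int k}. k)"
    using level(2) by (intro sum_mono) simp
  finally have "card (all_char_points F) \<le> k ^ 2"
    by (simp add: power2_eq_square)
  moreover have "finite (all_char_points F)"
    unfolding UN using level(1) by simp
  ultimately show ?thesis
    using level by simp
qed

end
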